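(* Let $\lambda>0$, $\ell>0$. Every curve $\gamma\in\omega$ is embedded (injective on $[0,1]$).
   Context: Elliptic functions: for $q\in[0,1)$, $x\in\mathbb{R}$, $\mathrm{F}(x,q)=\int_0^x(1-q^2\sin^2\theta)^{-1/2}\,d\theta$, $\mathrm{E}(x,q)=\int_0^x(1-q^2\sin^2\theta)^{1/2}\,d\theta$, $\mathrm{K}(q)=\mathrm{F}(\pi/2,q)$, $\mathrm{E}(q)=\mathrm{E}(\pi/2,q)$; $\mathrm{am}(\cdot,q)$ is the inverse of $x\mapsto\mathrm{F}(x,q)$, $\mathrm{cn}(x,q)=\cos\mathrm{am}(x,q)$. The function $q\mapsto2\mathrm{E}(q)-\mathrm{K}(q)$ is strictly decreasing on $[0,1)$ with unique zero $q_*\in(0,1)$. On $[1/\sqrt2,1)$ let $f(q)=(4q^4-5q^2+1)\mathrm{K}(q)+(-8q^4+8q^2-1)\mathrm{E}(q)$ and $g(q)=8(2\mathrm{E}(q)-\mathrm{K}(q))^2(2q^2-1)$. $f$ has a unique zero $\hat q\in[1/\sqrt2,1)$; $\hat\lambda:=g(\hat q)\approx0.70107$. $g(1/\sqrt2)=0$, $g$ strictly increasing on $[1/\sqrt2,\hat q]$, strictly decreasing on $[\hat q,q_*]$. For $c\in(0,\hat\lambda]$ let $q_1(c)\in(1/\sqrt2,\hat q]$, $q_2(c)\in[\hat q,q_* )$ solve $g(q)=c$. $A_\ell=\{\gamma\in W^{2,2}(0,1;\mathbb{R}^2): |\gamma'|\neq0$ on $[0,1]$, $\gamma(0)=(0,0),\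 \gamma(1)=(\ell,0)\}$. For $\lambda\ell^2\le\hat\lambda$, $\gamma_{\rm sarc}^{\lambda,\ell,1}:[0,2\mathrm{K}(q)/\alpha]\to\mathbb{R}^2$ is $\gamma(s)=\frac1\alpha\big(2\mathrm{E}(\mathrm{am}(\alpha s-\mathrm{K}(q),q),q)+2\mathrm{E}(q)-\alpha s,\ 2q\,\mathrm{cn}(\alpha s-\mathrm{K}(q),q)\big)$ with $q=q_1(\lambda\ell^2)$, $\alpha=\frac{2}{\ell}(2\mathrm{E}(q)-\mathrm{K}(q))$, and $\gamma_{\rm larc}^{\lambda,\ell,1}$ is the same formula with $q=q_2(\lambda\ell^2)$; $\bar\gamma_{\rm sarc}^{\lambda,\ell,1},\bar\gamma_{\rm larc}^{\lambda,\ell,1}:[0,1]\to\mathbb{R}^2$ are their constant-speed reparametrizations, and $\gamma_{\rm seg}:[0,1]\to\mathbb{R}^2$, $\gamma_{\rm seg}(x)=(\ell x,0)$, is the line segment. The set $\omega\subset A_\ell$ is $\{\gamma_{\rm seg},\bar\gamma_{\rm larc}^{\lambda,\ell,1},\bar\gamma_{\rm sarc}^{\lambda,\ell,1}\}$ if $\lambda\ell^2\le\hat\lambda$, and $\{\gamma_{\rm seg}\}$ if $\lambda\ell^2>\hat\lambda$. *)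

theory Defs
  imports "HOL-Analysis.Analysis"
begin

definition ellF :: "real \<Rightarrow> real \<Rightarrow> real" where
  "ellF x q = (LBINT \<theta>=0..x. 1 / sqrt (1 - q\<^sup>2 * (sin \<theta>)\<^sup>2))"

definition ellE :: "real \<Rightarrow> real \<Rightarrow> real" where
  "ellE x q = (LBINT \<theta>=0..x. sqrt (1 - q\<^sup>2 * (sin \<theta>)\<^sup>2))"

definition ellKc :: "real \<Rightarrow> real" where
  "ellKc q = ellF (pi / 2) q"

definition ellEc :: "real \<Rightarrow> real" where
  "ellEc q = ellE (pi / 2) q"

definition jam :: "real \<Rightarrow> real \<Rightarrow> real" where
  "jam y q = (THE x. ellF x q = y)"

definition jcn :: "real \<Rightarrow> real \<Rightarrow> real" where
  "jcn y q = cos (jam y q)"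

definition qstar :: real where
  "qstar = (THE q. 0 < q \<and> q < 1 \<and> 2 * ellEc q - ellKc q = 0)"

definition fpar :: "real \<Rightarrow> real" where
  "fpar q = (4*q^4 - 5*q\<^sup>2 + 1) * ellKc q + (-8*q^4 + 8*q\<^sup>2 - 1) * ellEc q"

definition gpar :: "real \<Rightarrow> real" where
  "gpar q = 8 * (2 * ellEc q - ellKc q)\<^sup>2 * (2*q\<^sup>2 - 1)"

definition qhat :: real where
  "qhat = (THE q. 1 / sqrt 2 \<le> q \<and> q < 1 \<and> fpar q = 0)"

definition lamhat :: real where
  "lamhat = gpar qhat"

definition q1 :: "real \<Rightarrow> real" where
  "q1 c = (THE q. 1 / sqrt 2 < q \<and> q \<le> qhat \<and> gpar q = c)"

definition q2 :: "real \<Rightarrow> real" where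
  "q2 c = (THE q. qhat \<le> q \<and> q < qstar \<and> gpar q = c)"

text \<open>The elastica arc with modulus q joining (0,0) to (l,0), on [0, 2K(q)/alpha].\<close>
definition arc_alpha :: "real \<Rightarrow> real \<Rightarrow> real" where
  "arc_alpha l q = 2 / l * (2 * ellEc q - ellKc q)"

definition arc_len :: "real \<Rightarrow> real \<Rightarrow> real" where
  "arc_len l q = 2 * ellKc q / arc_alpha l q"

definition arc_curve :: "real \<Rightarrow> real \<Rightarrow> real \<Rightarrow> real \<times> real" where
  "arc_curve l q s =
     (let \<alpha> = arc_alpha l q in
      ((2 * ellE (jam (\<alpha> * s - ellKc q) q) q + 2 * ellEc q - \<alpha> * s) / \<alpha>,
       (2 * q * jcn (\<alpha> * s - ellKc q) q) / \<alpha>))"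

definition arclength :: "(real \<Rightarrow> 'a::real_normed_vector) \<Rightarrow> real \<Rightarrow> real \<Rightarrow> real" where
  "arclength c a t = integral {a..t} (\<lambda>\<tau>. norm (vector_derivative c (at \<tau>)))"

definition const_speed_reparam ::
  "(real \<Rightarrow> 'a::real_normed_vector) \<Rightarrow> real \<Rightarrow> real \<Rightarrow> real \<Rightarrow> 'a" where
  "const_speed_reparam c a b x =
     c (THE t. t \<in> {a..b} \<and> arclength c a t = x * arclength c a b)"

definition gamma_sarc_bar :: "real \<Rightarrow> real \<Rightarrow> real \<Rightarrow> real \<times> real" where
  "gamma_sarc_bar lam l =
     (let q = q1 (lam * l\<^sup>2) in const_speed_reparam (arc_curve l q) 0 (arc_len l q))"

definition gamma_larc_bar :: "real \<Rightarrow> real \<Rightarrow> real \<Rightarrow> real \<times> real" where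
  "gamma_larc_bar lam l =
     (let q = q2 (lam * l\<^sup>2) in const_speed_reparam (arc_curve l q) 0 (arc_len l q))"

definition gamma_seg :: "real \<Rightarrow> real \<Rightarrow> real \<times> real" where
  "gamma_seg l x = (l * x, 0)"

definition omega :: "real \<Rightarrow> real \<Rightarrow> (real \<Rightarrow> real \<times> real) set" where
  "omega lam l =
     (if lam * l\<^sup>2 \<le> lamhat
      then {gamma_seg l, gamma_larc_bar lam l, gamma_sarc_bar lam l}
      else {gamma_seg l})"

end

theory Submission
  imports Defs
begin

(* An elastica arc of modulus q is parametrised by arclength
   through the amplitude \<phi> \<in> [-\<pi>/2, \<pi>/2], and its coordinates are, up to translation and the
   factor 1/\<alpha>, (h(\<phi>), 2q cos \<phi>) with h(\<phi>) = 2E(\<phi>,q) - F(\<phi>,q). Since cos \<phi> determines |\<phi>| and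
   h is odd, the arc is embedded as soon as h has no zero in (0, \<pi>/2]. As h' has the sign of
   1 - 2q\<^sup>2 sin\<^sup>2 \<phi>, h first rises and then falls there, so h > 0 on (0, \<pi>/2] whenever
   h(\<pi>/2) = 2E(q) - K(q) > 0, i.e. whenever q < q_*.

   Most of the work goes into showing that q_*, q^, q_1(c) and q_2(c) are well defined and that
   q_1(c), q_2(c) < q_*. Differentiating under the integral sign gives K' = (E/(1-q\<^sup>2) - K)/q and
   E' = (E - K)/q. Hence 2E - K is strictly decreasing, f' < 0 at every zero of f (so f has at
   most one zero), and g' = 16 (2E - K) f / (q (1 - q\<^sup>2)). *)

section \<open>Elliptic integrals as functions of the amplitude\<close>

lemma has_real_derivative_LBINT_0:
  fixes f :: "real \<Rightarrow> real"
  assumes "continuous_on UNIV f"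
  shows "((\<lambda>u. LBINT y=0..u. f y) has_real_derivative f x) (at x)"
proof -
  have "((\<lambda>u. LBINT y=0..u. f y) has_vector_derivative f x) (at x within {-\<bar>x\<bar>-1..\<bar>x\<bar>+1})"
    using interval_integral_FTC2[of "-\<bar>x\<bar>-1" 0 "\<bar>x\<bar>+1" f x] continuous_on_subset[OF assms]
    by (simp add: zero_ereal_def)
  moreover have "x \<in> interior {-\<bar>x\<bar>-1..\<bar>x\<bar>+1}" by auto
  ultimately show ?thesis
    by (metis at_within_interior has_real_derivative_iff_has_vector_derivative)
qed

lemma odd_if_derivative_even:
  fixes f f' :: "real \<Rightarrow> real"
  assumes deriv: "\<And>x. (f has_real_derivative f' x) (at x)"
    and even: "\<And>x. f' (- x) = f' x" and "f 0 = 0"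
  shows "f (- x) = - f x"
proof -
  have "((\<lambda>x. f (- x) + f x) has_real_derivative 0) (at y)" for y
  proof -
    have "((\<lambda>x. f (- x)) has_real_derivative f' (- y) * (- 1)) (at y)"
      by (rule DERIV_chain2[OF deriv]) (auto intro!: derivative_eq_intros)
    from DERIV_add[OF this deriv] show ?thesis by (simp add: even)
  qed
  then have "f (- x) + f x = f (- 0) + f 0"
    using DERIV_isconst_all by blast
  with \<open>f 0 = 0\<close> show ?thesis by simp
qed

lemma ell_radicand_pos:
  fixes q t :: real
  assumes "q\<^sup>2 < 1"
  shows "0 < 1 - q\<^sup>2 * (sin t)\<^sup>2"
proof -
  have "q\<^sup>2 * (sin t)\<^sup>2 \<le> q\<^sup>2"
    by (simp add: abs_square_le_1 mult_left_le)
  with assms show ?thesis by linarith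
qed

lemma ell_sqrt_radicand_pos:
  fixes q t :: real
  shows "q\<^sup>2 < 1 \<Longrightarrow> 0 < sqrt (1 - q\<^sup>2 * (sin t)\<^sup>2)"
  using ell_radicand_pos by simp

lemma ellF_0 [simp]: "ellF 0 q = 0"
  by (simp add: ellF_def zero_ereal_def)

lemma ellE_0 [simp]: "ellE 0 q = 0"
  by (simp add: ellE_def zero_ereal_def)

lemma ellF_has_real_derivative:
  assumes "q\<^sup>2 < 1"
  shows "((\<lambda>x. ellF x q) has_real_derivative 1 / sqrt (1 - q\<^sup>2 * (sin x)\<^sup>2)) (at x)"
  unfolding ellF_def
  by (rule has_real_derivative_LBINT_0)
     (use ell_radicand_pos[OF assms] in \<open>auto intro!: continuous_intros simp: less_imp_neq\<close>)

lemma ellE_has_real_derivative: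
  "((\<lambda>x. ellE x q) has_real_derivative sqrt (1 - q\<^sup>2 * (sin x)\<^sup>2)) (at x)"
  unfolding ellE_def by (rule has_real_derivative_LBINT_0) (auto intro!: continuous_intros)

lemma ellF_minus:
  assumes "q\<^sup>2 < 1"
  shows "ellF (- x) q = - ellF x q"
  by (rule odd_if_derivative_even[OF ellF_has_real_derivative[OF assms]]) auto

lemma ellE_minus: "ellE (- x) q = - ellE x q"
  by (rule odd_if_derivative_even[OF ellE_has_real_derivative]) auto

lemma ellF_strict_mono:
  assumes "q\<^sup>2 < 1"
  shows "strict_mono (\<lambda>x. ellF x q)"
proof (rule strict_monoI)
  fix a b :: real
  assume "a < b"
  then show "ellF a q < ellF b q"
    using DERIV_pos_imp_increasing[of a b "\<lambda>x. ellF x q"] ellF_has_real_derivative[OF assms]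
      ell_sqrt_radicand_pos[OF assms] by force
qed

lemma ellF_diff_ge:
  assumes "q\<^sup>2 < 1" "a \<le> b"
  shows "b - a \<le> ellF b q - ellF a q"
proof -
  have "(\<lambda>x. ellF x q - x) a \<le> (\<lambda>x. ellF x q - x) b"
  proof (rule DERIV_nonneg_imp_nondecreasing[OF assms(2)])
    fix x
    have "0 \<le> 1 / sqrt (1 - q\<^sup>2 * (sin x)\<^sup>2) - 1"
      using ell_sqrt_radicand_pos[OF assms(1), of x] by (simp add: field_simps)
    then show "\<exists>y. ((\<lambda>x. ellF x q - x) has_real_derivative y) (at x) \<and> 0 \<le> y"
      using DERIV_diff[OF ellF_has_real_derivative[OF assms(1)] DERIV_ident] by blast
  qed
  then show ?thesis by simp
qed

lemma surj_ellF:
  assumes "q\<^sup>2 < 1"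
  shows "surj (\<lambda>x. ellF x q)"
proof -
  have cont: "continuous_on UNIV (\<lambda>x. ellF x q)"
    using ellF_has_real_derivative[OF assms]
    by (meson DERIV_isCont continuous_at_imp_continuous_on)
  have "\<exists>x. ellF x q = u" for u
  proof (cases "0 \<le> u")
    case True
    then show ?thesis
      using IVT'[of "\<lambda>x. ellF x q" 0 u u] ellF_diff_ge[OF assms True] continuous_on_subset[OF cont]
      by auto
  next
    case False
    then show ?thesis
      using IVT'[of "\<lambda>x. ellF x q" u u 0] ellF_diff_ge[OF assms, of u 0] continuous_on_subset[OF cont]
      by auto
  qed
  then show ?thesis by (metis surj_def)
qed

lemma jam_ellF:
  assumes "q\<^sup>2 < 1"
  shows "jam (ellF x q) q = x"
  unfolding jam_def using strict_mono_eq[OF ellF_strict_mono[OF assms]] by auto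

lemma ellF_jam:
  assumes "q\<^sup>2 < 1"
  shows "ellF (jam u q) q = u"
  using surjD[OF surj_ellF[OF assms], of u] jam_ellF[OF assms] by auto

lemma jam_strict_mono:
  assumes "q\<^sup>2 < 1"
  shows "strict_mono (\<lambda>u. jam u q)"
  by (rule strict_monoI)
     (metis ellF_jam[OF assms] strict_mono_less[OF ellF_strict_mono[OF assms]])

lemma jam_has_real_derivative:
  assumes "q\<^sup>2 < 1"
  shows "((\<lambda>u. jam u q) has_real_derivative sqrt (1 - q\<^sup>2 * (sin (jam u q))\<^sup>2)) (at u)"
proof -
  have cont: "isCont (\<lambda>u. jam u q) (ellF (jam u q) q)"
    by (rule isCont_inverse_function[where d=1])
       (auto simp: jam_ellF[OF assms] intro: DERIV_isCont[OF ellF_has_real_derivative[OF assms]])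
  have "((\<lambda>u. jam u q) has_real_derivative inverse (1 / sqrt (1 - q\<^sup>2 * (sin (jam u q))\<^sup>2))) (at u)"
    by (rule DERIV_inverse_function[where f="\<lambda>x. ellF x q" and a="u - 1" and b="u + 1"])
       (use ellF_has_real_derivative[OF assms] ell_sqrt_radicand_pos[OF assms, of "jam u q"] cont
         in \<open>auto simp: ellF_jam[OF assms]\<close>)
  then show ?thesis by simp
qed

lemma ellKc_ge_pi_half:
  assumes "q\<^sup>2 < 1"
  shows "pi / 2 \<le> ellKc q"
  using ellF_diff_ge[OF assms, of 0 "pi / 2"] by (simp add: ellKc_def)

lemma jam_mem_pi_half:
  assumes "q\<^sup>2 < 1" "\<bar>u\<bar> \<le> ellKc q"
  shows "jam u q \<in> {- (pi / 2)..pi / 2}"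
proof -
  have "jam (- ellKc q) q \<le> jam u q" "jam u q \<le> jam (ellKc q) q"
    using assms(2) strict_mono_less_eq[OF jam_strict_mono[OF assms(1)]] by auto
  moreover have "jam (ellKc q) q = pi / 2" "jam (- ellKc q) q = - (pi / 2)"
    using jam_ellF[OF assms(1), of "pi / 2"] jam_ellF[OF assms(1), of "- (pi / 2)"]
    by (simp_all add: ellKc_def ellF_minus[OF assms(1)])
  ultimately show ?thesis by simp
qed

section \<open>Embeddedness of the elastica arcs\<close>

lemma sin_power2_mono:
  assumes "0 \<le> x" "x \<le> y" "y \<le> pi / 2"
  shows "(sin x)\<^sup>2 \<le> (sin y)\<^sup>2"
  using assms sin_monotone_2pi_le[of x y] sin_ge_zero[of x] by (simp add: power_mono)

lemma twice_ellE_minus_ellF_has_real_derivative: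
  assumes "q\<^sup>2 < 1"
  shows "((\<lambda>x. 2 * ellE x q - ellF x q) has_real_derivative
           (1 - 2 * q\<^sup>2 * (sin x)\<^sup>2) / sqrt (1 - q\<^sup>2 * (sin x)\<^sup>2)) (at x)"
proof -
  have "((\<lambda>x. 2 * ellE x q - ellF x q) has_real_derivative
           2 * sqrt (1 - q\<^sup>2 * (sin x)\<^sup>2) - 1 / sqrt (1 - q\<^sup>2 * (sin x)\<^sup>2)) (at x)"
    by (intro DERIV_diff DERIV_cmult ellE_has_real_derivative ellF_has_real_derivative assms)
  moreover have "2 * sqrt (1 - q\<^sup>2 * (sin x)\<^sup>2) - 1 / sqrt (1 - q\<^sup>2 * (sin x)\<^sup>2)
      = (1 - 2 * q\<^sup>2 * (sin x)\<^sup>2) / sqrt (1 - q\<^sup>2 * (sin x)\<^sup>2)"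
    using ell_radicand_pos[OF assms, of x] by (simp add: field_simps)
  ultimately show ?thesis by simp
qed

lemma twice_ellE_minus_ellF_pos:
  assumes q: "q\<^sup>2 < 1" and G: "0 < 2 * ellEc q - ellKc q" and \<phi>: "0 < \<phi>" "\<phi> \<le> pi / 2"
  shows "0 < 2 * ellE \<phi> q - ellF \<phi> q"
proof (cases "2 * q\<^sup>2 * (sin \<phi>)\<^sup>2 < 1")
  case True
  have "(\<lambda>x. 2 * ellE x q - ellF x q) 0 < (\<lambda>x. 2 * ellE x q - ellF x q) \<phi>"
  proof (rule DERIV_pos_imp_increasing[OF \<phi>(1)])
    fix x
    assume "0 \<le> x" "x \<le> \<phi>"
    then have "(sin x)\<^sup>2 \<le> (sin \<phi>)\<^sup>2"
      using \<phi> by (intro sin_power2_mono)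
    then have "q\<^sup>2 * (sin x)\<^sup>2 \<le> q\<^sup>2 * (sin \<phi>)\<^sup>2"
      by (simp add: mult_left_mono)
    then have "0 < (1 - 2 * q\<^sup>2 * (sin x)\<^sup>2) / sqrt (1 - q\<^sup>2 * (sin x)\<^sup>2)"
      using True ell_sqrt_radicand_pos[OF q, of x] by (intro divide_pos_pos) auto
    then show "\<exists>y. ((\<lambda>x. 2 * ellE x q - ellF x q) has_real_derivative y) (at x) \<and> 0 < y"
      using twice_ellE_minus_ellF_has_real_derivative[OF q] by blast
  qed
  then show ?thesis by simp
next
  case False
  have "(\<lambda>x. 2 * ellE x q - ellF x q) (pi / 2) \<le> (\<lambda>x. 2 * ellE x q - ellF x q) \<phi>"
  proof (rule DERIV_nonpos_imp_nonincreasing[OF \<phi>(2)])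
    fix x
    assume "\<phi> \<le> x" "x \<le> pi / 2"
    then have "(sin \<phi>)\<^sup>2 \<le> (sin x)\<^sup>2"
      using \<phi> by (intro sin_power2_mono) auto
    then have "q\<^sup>2 * (sin \<phi>)\<^sup>2 \<le> q\<^sup>2 * (sin x)\<^sup>2"
      by (simp add: mult_left_mono)
    then have "(1 - 2 * q\<^sup>2 * (sin x)\<^sup>2) / sqrt (1 - q\<^sup>2 * (sin x)\<^sup>2) \<le> 0"
      using False ell_sqrt_radicand_pos[OF q, of x] by (intro divide_nonpos_pos) auto
    then show "\<exists>y. ((\<lambda>x. 2 * ellE x q - ellF x q) has_real_derivative y) (at x) \<and> y \<le> 0"
      using twice_ellE_minus_ellF_has_real_derivative[OF q] by blast
  qed
  with G show ?thesis unfolding ellEc_def ellKc_def by linarith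
qed

lemma inj_on_twice_ellE_minus_ellF_cos:
  assumes q: "q\<^sup>2 < 1" and G: "0 < 2 * ellEc q - ellKc q"
  shows "inj_on (\<lambda>\<phi>. (2 * ellE \<phi> q - ellF \<phi> q, cos \<phi>)) {- (pi / 2)..pi / 2}"
proof -
  define h where "h \<phi> = 2 * ellE \<phi> q - ellF \<phi> q" for \<phi>
  have h_minus: "h (- \<phi>) = - h \<phi>" for \<phi>
    by (simp add: h_def ellE_minus ellF_minus[OF q])
  have h_nonzero: "h \<phi> \<noteq> 0" if "\<phi> \<noteq> 0" "\<bar>\<phi>\<bar> \<le> pi / 2" for \<phi>
  proof (cases "0 < \<phi>")
    case True
    with that show ?thesis using twice_ellE_minus_ellF_pos[OF q G, of \<phi>] by (auto simp: h_def)
  next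
    case False
    with that have "0 < h (- \<phi>)" using twice_ellE_minus_ellF_pos[OF q G, of "- \<phi>"] by (auto simp: h_def)
    then show ?thesis by (simp add: h_minus)
  qed
  show ?thesis
  proof (rule inj_onI)
    fix \<phi> \<psi>
    assume "\<phi> \<in> {- (pi / 2)..pi / 2}" "\<psi> \<in> {- (pi / 2)..pi / 2}"
    then have range: "\<bar>\<phi>\<bar> \<le> pi / 2" "\<bar>\<psi>\<bar> \<le> pi / 2" by auto
    assume "(2 * ellE \<phi> q - ellF \<phi> q, cos \<phi>) = (2 * ellE \<psi> q - ellF \<psi> q, cos \<psi>)"
    then have eq: "h \<phi> = h \<psi>" "cos \<bar>\<phi>\<bar> = cos \<bar>\<psi>\<bar>" by (simp_all add: h_def)
    have "\<bar>\<phi>\<bar> = \<bar>\<psi>\<bar>"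
      using range pi_gt_zero by (intro cos_inj_pi[OF _ _ _ _ eq(2)]) linarith+
    then consider "\<phi> = \<psi>" | "\<phi> = - \<psi>" by (auto simp: abs_eq_iff)
    then show "\<phi> = \<psi>"
    proof cases
      case 2
      then have "h \<phi> = - h \<psi>" using h_minus[of \<psi>] by simp
      with eq(1) have "h \<phi> = 0" by linarith
      then have "\<phi> = 0" using h_nonzero range(1) by blast
      with 2 show ?thesis by simp
    qed simp
  qed
qed

lemma arc_curve_amplitude_form:
  fixes l q s :: real
  assumes "q\<^sup>2 < 1"
  defines "\<phi> \<equiv> jam (arc_alpha l q * s - ellKc q) q"
  shows "arc_curve l q s =
    ((2 * ellE \<phi> q - ellF \<phi> q + (2 * ellEc q - ellKc q)) / arc_alpha l q,
     2 * q * cos \<phi> / arc_alpha l q)"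
  using ellF_jam[OF assms(1), of "arc_alpha l q * s - ellKc q"]
  by (simp add: arc_curve_def jcn_def \<phi>_def Let_def)

lemma inj_on_arc_curve:
  assumes q: "0 < q" "q\<^sup>2 < 1" and G: "0 < 2 * ellEc q - ellKc q" and "0 < l"
  shows "inj_on (arc_curve l q) {0..arc_len l q}"
proof -
  define \<alpha> K where "\<alpha> = arc_alpha l q" and "K = ellKc q"
  have "0 < \<alpha>" unfolding \<alpha>_def arc_alpha_def using G \<open>0 < l\<close> by simp
  define amp where "amp s = jam (\<alpha> * s - K) q" for s
  have amp_range: "amp s \<in> {- (pi / 2)..pi / 2}" if "s \<in> {0..arc_len l q}" for s
  proof -
    have "\<alpha> * s \<le> \<alpha> * arc_len l q" "0 \<le> \<alpha> * s"
      using that \<open>0 < \<alpha>\<close> by (simp_all add: mult_left_mono)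
    moreover have "\<alpha> * arc_len l q = 2 * K"
      using \<open>0 < \<alpha>\<close> by (simp add: arc_len_def \<alpha>_def K_def)
    ultimately have "\<bar>\<alpha> * s - K\<bar> \<le> ellKc q"
      by (simp add: K_def abs_le_iff)
    then show ?thesis
      unfolding amp_def by (rule jam_mem_pi_half[OF q(2)])
  qed
  have inj_amp: "inj_on amp {0..arc_len l q}"
  proof (rule inj_onI)
    fix s t
    assume "amp s = amp t"
    with \<open>0 < \<alpha>\<close> show "s = t"
      by (simp add: amp_def strict_mono_eq[OF jam_strict_mono[OF q(2)]])
  qed
  define h where "h \<phi> = (2 * ellE \<phi> q - ellF \<phi> q, cos \<phi>)" for \<phi>
  define P where "P = (\<lambda>(x, y). ((x + (2 * ellEc q - K)) / \<alpha>, 2 * q * y / \<alpha>))"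
  have "inj_on h {- (pi / 2)..pi / 2}"
    using inj_on_twice_ellE_minus_ellF_cos[OF q(2) G] unfolding h_def[abs_def] .
  then have "inj_on (h \<circ> amp) {0..arc_len l q}"
    by (rule comp_inj_on[OF inj_amp inj_on_subset[OF _ image_subsetI[OF amp_range]]])
  moreover have "inj P"
    using \<open>0 < \<alpha>\<close> q(1) by (auto simp: inj_def P_def)
  ultimately have "inj_on (P \<circ> (h \<circ> amp)) {0..arc_len l q}"
    by (rule comp_inj_on[OF _ inj_on_subset[OF _ subset_UNIV]])
  moreover have "arc_curve l q = P \<circ> (h \<circ> amp)"
    by (auto simp: arc_curve_amplitude_form[OF q(2)] amp_def \<alpha>_def K_def P_def h_def)
  ultimately show ?thesis by simp
qed

lemma arc_curve_has_vector_derivative: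
  fixes l q s :: real
  assumes q: "q\<^sup>2 < 1" and "arc_alpha l q \<noteq> 0"
  defines "\<phi> \<equiv> jam (arc_alpha l q * s - ellKc q) q"
  shows "(arc_curve l q has_vector_derivative
           (1 - 2 * q\<^sup>2 * (sin \<phi>)\<^sup>2, - 2 * q * sin \<phi> * sqrt (1 - q\<^sup>2 * (sin \<phi>)\<^sup>2))) (at s)"
proof -
  define \<alpha> K \<Delta> where "\<alpha> = arc_alpha l q" and "K = ellKc q"
    and "\<Delta> = sqrt (1 - q\<^sup>2 * (sin \<phi>)\<^sup>2)"
  have amp: "((\<lambda>s. jam (\<alpha> * s - K) q) has_real_derivative \<Delta> * \<alpha>) (at s)"
    unfolding \<Delta>_def \<phi>_def \<alpha>_def[symmetric] K_def[symmetric]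
    by (rule DERIV_chain2[OF jam_has_real_derivative[OF q]]) (auto intro!: derivative_eq_intros)
  have ellE_amp: "((\<lambda>s. ellE (jam (\<alpha> * s - K) q) q) has_real_derivative \<Delta> * (\<Delta> * \<alpha>)) (at s)"
    using DERIV_chain2[OF ellE_has_real_derivative amp] unfolding \<Delta>_def \<phi>_def \<alpha>_def K_def .
  have cos_amp: "((\<lambda>s. cos (jam (\<alpha> * s - K) q)) has_real_derivative - sin \<phi> * (\<Delta> * \<alpha>)) (at s)"
    using DERIV_chain2[OF DERIV_cos amp] unfolding \<phi>_def \<alpha>_def K_def .
  have "((\<lambda>s. (2 * ellE (jam (\<alpha> * s - K) q) q + 2 * ellEc q - \<alpha> * s) / \<alpha>) has_real_derivative
      (2 * (\<Delta> * (\<Delta> * \<alpha>)) - \<alpha>) / \<alpha>) (at s)"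
    using DERIV_cdivide[OF DERIV_diff[OF DERIV_add[OF DERIV_cmult[OF ellE_amp, of 2]
        DERIV_const[of "2 * ellEc q"]] DERIV_cmult[OF DERIV_ident, of \<alpha>]], of \<alpha>]
    by simp
  moreover have "((\<lambda>s. 2 * q * cos (jam (\<alpha> * s - K) q) / \<alpha>) has_real_derivative
      2 * q * (- sin \<phi> * (\<Delta> * \<alpha>)) / \<alpha>) (at s)"
    by (intro DERIV_cdivide DERIV_cmult cos_amp)
  ultimately have deriv: "(arc_curve l q has_vector_derivative
      ((2 * (\<Delta> * (\<Delta> * \<alpha>)) - \<alpha>) / \<alpha>, 2 * q * (- sin \<phi> * (\<Delta> * \<alpha>)) / \<alpha>)) (at s)"
    unfolding arc_curve_def jcn_def Let_def \<alpha>_def[symmetric] K_def[symmetric]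
    by (intro has_vector_derivative_Pair) (simp_all add: has_real_derivative_iff_has_vector_derivative)
  have "\<alpha> \<noteq> 0" "\<Delta> * \<Delta> = 1 - q\<^sup>2 * (sin \<phi>)\<^sup>2"
    using assms(2) ell_radicand_pos[OF q, of \<phi>] by (simp_all add: \<alpha>_def \<Delta>_def)
  then have "(2 * (\<Delta> * (\<Delta> * \<alpha>)) - \<alpha>) / \<alpha> = 1 - 2 * q\<^sup>2 * (sin \<phi>)\<^sup>2"
    "2 * q * (- sin \<phi> * (\<Delta> * \<alpha>)) / \<alpha> = - 2 * q * sin \<phi> * \<Delta>"
    by (simp_all add: field_simps) algebra
  with deriv show ?thesis by (simp add: \<Delta>_def)
qed

lemma norm_arc_curve_derivative:
  fixes l q s :: real
  assumes q: "q\<^sup>2 < 1" and "arc_alpha l q \<noteq> 0"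
  shows "norm (vector_derivative (arc_curve l q) (at s)) = 1"
proof -
  define \<phi> where "\<phi> = jam (arc_alpha l q * s - ellKc q) q"
  have "(sqrt (1 - q\<^sup>2 * (sin \<phi>)\<^sup>2))\<^sup>2 = 1 - q\<^sup>2 * (sin \<phi>)\<^sup>2"
    using ell_radicand_pos[OF q, of \<phi>] by simp
  then have "(1 - 2 * q\<^sup>2 * (sin \<phi>)\<^sup>2)\<^sup>2 + (- 2 * q * sin \<phi> * sqrt (1 - q\<^sup>2 * (sin \<phi>)\<^sup>2))\<^sup>2 = 1"
    by (simp add: power_mult_distrib algebra_simps power2_eq_square)
  then show ?thesis
    using vector_derivative_at[OF arc_curve_has_vector_derivative[OF assms, of s]]
    by (simp add: norm_Pair \<phi>_def)
qed

lemma affine_point_mem_atLeastAtMost: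
  fixes a b x :: real
  assumes "a \<le> b" "x \<in> {0..1}"
  shows "a + x * (b - a) \<in> {a..b}"
proof -
  have "x * (b - a) \<le> 1 * (b - a)"
    using assms by (intro mult_right_mono) auto
  moreover have "0 \<le> x * (b - a)"
    using assms by simp
  ultimately show ?thesis by simp
qed

lemma const_speed_reparam_unit_speed:
  fixes c :: "real \<Rightarrow> 'a::real_normed_vector"
  assumes "a < b" and speed: "\<And>s. s \<in> {a..b} \<Longrightarrow> norm (vector_derivative c (at s)) = 1"
    and "x \<in> {0..1}"
  shows "const_speed_reparam c a b x = c (a + x * (b - a))"
proof -
  have arclength: "arclength c a t = t - a" if "t \<in> {a..b}" for t
  proof -
    have "arclength c a t = integral {a..t} (\<lambda>_. 1::real)"
      unfolding arclength_def using that speed by (intro integral_cong) auto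
    then show ?thesis using that by simp
  qed
  have "a + x * (b - a) \<in> {a..b}"
    using assms(1,3) by (intro affine_point_mem_atLeastAtMost) auto
  then have "(THE t. t \<in> {a..b} \<and> arclength c a t = x * arclength c a b) = a + x * (b - a)"
    using assms(1) by (intro the_equality) (auto simp: arclength)
  then show ?thesis unfolding const_speed_reparam_def by simp
qed

lemma inj_on_const_speed_reparam_unit_speed:
  fixes c :: "real \<Rightarrow> 'a::real_normed_vector"
  assumes "a < b" and "\<And>s. s \<in> {a..b} \<Longrightarrow> norm (vector_derivative c (at s)) = 1"
    and "inj_on c {a..b}"
  shows "inj_on (const_speed_reparam c a b) {0..1}"
proof (rule inj_onI)
  fix x y :: real
  assume x: "x \<in> {0..1}" and y: "y \<in> {0..1}"
  have mem: "a + z * (b - a) \<in> {a..b}" if "z \<in> {0..1}" for z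
    using \<open>a < b\<close> that by (intro affine_point_mem_atLeastAtMost) auto
  assume "const_speed_reparam c a b x = const_speed_reparam c a b y"
  then have "c (a + x * (b - a)) = c (a + y * (b - a))"
    using const_speed_reparam_unit_speed[OF assms(1,2)] x y by simp
  then have "a + x * (b - a) = a + y * (b - a)"
    using inj_onD[OF assms(3)] mem x y by blast
  with \<open>a < b\<close> show "x = y" by simp
qed

lemma inj_on_const_speed_arc:
  assumes "0 < q" "q\<^sup>2 < 1" and G: "0 < 2 * ellEc q - ellKc q" and "0 < l"
  shows "inj_on (const_speed_reparam (arc_curve l q) 0 (arc_len l q)) {0..1}"
proof (rule inj_on_const_speed_reparam_unit_speed)
  have "0 < arc_alpha l q" unfolding arc_alpha_def using G \<open>0 < l\<close> by simp
  moreover have "0 < ellKc q"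
    using ellKc_ge_pi_half[OF assms(2)] pi_gt_zero by linarith
  ultimately show "0 < arc_len l q" by (simp add: arc_len_def)
  show "norm (vector_derivative (arc_curve l q) (at s)) = 1" for s
    using norm_arc_curve_derivative[OF assms(2)] \<open>0 < arc_alpha l q\<close> by simp
qed (use inj_on_arc_curve[OF assms] in simp)

section \<open>Complete elliptic integrals as functions of the modulus\<close>

lemma has_real_derivative_parametric_integral:
  fixes f f' :: "real \<Rightarrow> real \<Rightarrow> real"
  assumes "open U" "convex U" "x \<in> U"
    and deriv: "\<And>x t. x \<in> U \<Longrightarrow> t \<in> {a..b} \<Longrightarrow> ((\<lambda>x. f x t) has_real_derivative f' x t) (at x)"
    and "\<And>x. x \<in> U \<Longrightarrow> continuous_on {a..b} (f x)"
    and "continuous_on (U \<times> {a..b}) (\<lambda>(x, t). f' x t)"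
  shows "((\<lambda>x. integral {a..b} (f x)) has_real_derivative integral {a..b} (f' x)) (at x)"
proof -
  have "((\<lambda>x. integral (cbox a b) (f x)) has_field_derivative integral (cbox a b) (f' x)) (at x within U)"
    using assms by (intro leibniz_rule_field_derivative)
      (auto intro: has_field_derivative_at_within integrable_continuous_real)
  then show ?thesis
    using at_within_open[OF \<open>x \<in> U\<close> \<open>open U\<close>] by simp
qed

lemma ellKc_eq_integral:
  assumes "q\<^sup>2 < 1"
  shows "ellKc q = integral {0..pi / 2} (\<lambda>t. 1 / sqrt (1 - q\<^sup>2 * (sin t)\<^sup>2))"
proof -
  have "continuous_on {0..pi / 2} (\<lambda>t. 1 / sqrt (1 - q\<^sup>2 * (sin t)\<^sup>2))"
    using ell_radicand_pos[OF assms] by (auto intro!: continuous_intros simp: less_imp_neq)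
  from interval_integral_eq_integral[OF _ borel_integrable_atLeastAtMost'[OF this]] show ?thesis
    unfolding ellKc_def ellF_def by (simp add: zero_ereal_def)
qed

lemma ellEc_eq_integral:
  "ellEc q = integral {0..pi / 2} (\<lambda>t. sqrt (1 - q\<^sup>2 * (sin t)\<^sup>2))"
proof -
  have "continuous_on {0..pi / 2} (\<lambda>t. sqrt (1 - q\<^sup>2 * (sin t)\<^sup>2))"
    by (auto intro!: continuous_intros)
  from interval_integral_eq_integral[OF _ borel_integrable_atLeastAtMost'[OF this]] show ?thesis
    unfolding ellEc_def ellE_def by (simp add: zero_ereal_def)
qed

text \<open>\<open>q\<^sup>2 sin t cos t / \<Delta>(t)\<close>, where \<open>\<Delta>(t) = \<surd>(1 - q\<^sup>2 sin\<^sup>2 t)\<close>, vanishes at \<open>0\<close> and \<open>\<pi>/2\<close>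
  and has derivative \<open>\<Delta>(t) - (1 - q\<^sup>2) / \<Delta>(t)\<^sup>3\<close>.\<close>
lemma ell_integral_inverse_cube:
  assumes q: "q\<^sup>2 < 1"
  shows "(1 - q\<^sup>2) * integral {0..pi / 2}
           (\<lambda>t. 1 / ((1 - q\<^sup>2 * (sin t)\<^sup>2) * sqrt (1 - q\<^sup>2 * (sin t)\<^sup>2))) = ellEc q"
proof -
  define D where "D t = 1 - q\<^sup>2 * (sin t)\<^sup>2" for t
  have D_pos: "0 < D t" for t
    using ell_radicand_pos[OF q] by (simp add: D_def)
  have D: "0 < D t" "sqrt (D t) * sqrt (D t) = D t" for t
    using D_pos[of t] by simp_all
  define w where "w t = q\<^sup>2 * (sin t * cos t / sqrt (D t))" for t
  have deriv: "(w has_real_derivative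
      sqrt (D t) - (1 - q\<^sup>2) / (D t * sqrt (D t))) (at t)" for t
  proof -
    have "((\<lambda>t. q\<^sup>2 * (sin t * cos t / sqrt (D t))) has_real_derivative
      q\<^sup>2 * (((cos t * cos t - sin t * sin t) * sqrt (D t)
        - sin t * cos t * (- (q\<^sup>2 * (2 * sin t * cos t)) / (2 * sqrt (D t)))) / D t)) (at t)"
      unfolding D_def using D(1)[of t] D(2)[of t]
      by (auto intro!: derivative_eq_intros simp: D_def field_simps power2_eq_square)
    moreover have "q\<^sup>2 * (((cos t * cos t - sin t * sin t) * sqrt (D t)
        - sin t * cos t * (- (q\<^sup>2 * (2 * sin t * cos t)) / (2 * sqrt (D t)))) / D t)
      = sqrt (D t) - (1 - q\<^sup>2) / (D t * sqrt (D t))"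
      using D(1)[of t] D(2)[of t]
      by (simp add: D_def field_simps) (use sin_cos_squared_add[of t] in algebra)
    ultimately show ?thesis by (simp add: w_def[abs_def])
  qed
  have "((\<lambda>t. sqrt (D t) - (1 - q\<^sup>2) / (D t * sqrt (D t))) has_integral w (pi / 2) - w 0) {0..pi / 2}"
    by (rule fundamental_theorem_of_calculus)
      (auto simp: has_real_derivative_iff_has_vector_derivative[symmetric]
        intro: has_field_derivative_at_within deriv)
  then have exact: "((\<lambda>t. sqrt (D t) - (1 - q\<^sup>2) / (D t * sqrt (D t))) has_integral 0) {0..pi / 2}"
    by (simp add: w_def)
  have "((\<lambda>t. sqrt (D t)) has_integral ellEc q) {0..pi / 2}"
    unfolding ellEc_eq_integral D_def
    by (intro integrable_integral integrable_continuous_interval) (auto intro!: continuous_intros)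
  from has_integral_diff[OF this exact]
  have "((\<lambda>t. (1 - q\<^sup>2) * (1 / (D t * sqrt (D t)))) has_integral ellEc q) {0..pi / 2}"
    by simp
  then have "integral {0..pi / 2} (\<lambda>t. (1 - q\<^sup>2) * (1 / (D t * sqrt (D t)))) = ellEc q"
    by (rule integral_unique)
  then show ?thesis
    unfolding integral_mult_right by (simp add: D_def)
qed

lemma has_real_derivative_inverse_sqrt_radicand:
  fixes x s :: real
  assumes "0 < 1 - x\<^sup>2 * s" "x \<noteq> 0"
  shows "((\<lambda>x. 1 / sqrt (1 - x\<^sup>2 * s)) has_real_derivative
           (1 / ((1 - x\<^sup>2 * s) * sqrt (1 - x\<^sup>2 * s)) - 1 / sqrt (1 - x\<^sup>2 * s)) / x) (at x)"
proof -
  define D where "D = 1 - x\<^sup>2 * s"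
  have "0 < D" "(sqrt D)\<^sup>2 = D" "1 - D = x * (x * s)"
    using assms(1) by (simp_all add: D_def power2_eq_square)
  have "((\<lambda>x. 1 / sqrt (1 - x\<^sup>2 * s)) has_real_derivative x * s / (D * sqrt D)) (at x)"
    using \<open>0 < D\<close> \<open>(sqrt D)\<^sup>2 = D\<close> unfolding D_def
    by (auto intro!: derivative_eq_intros simp: field_simps power_divide)
  moreover have "(1 / (D * sqrt D) - 1 / sqrt D) / x = x * s / (D * sqrt D)"
    using \<open>0 < D\<close> assms(2) by (simp add: field_simps) (use \<open>1 - D = _\<close> in algebra)
  ultimately show ?thesis
    by (simp add: D_def)
qed

lemma has_real_derivative_sqrt_radicand:
  fixes x s :: real
  assumes "0 < 1 - x\<^sup>2 * s" "x \<noteq> 0"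
  shows "((\<lambda>x. sqrt (1 - x\<^sup>2 * s)) has_real_derivative
           (sqrt (1 - x\<^sup>2 * s) - 1 / sqrt (1 - x\<^sup>2 * s)) / x) (at x)"
proof -
  define D where "D = 1 - x\<^sup>2 * s"
  have "0 < D" "1 - D = x * (x * s)"
    using assms(1) by (simp_all add: D_def power2_eq_square)
  have "((\<lambda>x. sqrt (1 - x\<^sup>2 * s)) has_real_derivative inverse (sqrt D) / 2 * - (2 * x * s)) (at x)"
    using \<open>0 < D\<close> unfolding D_def by (auto intro!: derivative_eq_intros)
  moreover have "inverse (sqrt D) / 2 * - (2 * x * s) = (sqrt D - 1 / sqrt D) / x"
    using \<open>0 < D\<close> assms(2) by (simp add: field_simps) (use \<open>1 - D = _\<close> in algebra)
  ultimately show ?thesis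
    by (simp add: D_def)
qed

lemma ellKc_has_real_derivative:
  assumes "0 < q" "q < 1"
  shows "(ellKc has_real_derivative (ellEc q / (1 - q\<^sup>2) - ellKc q) / q) (at q)"
proof -
  let ?U = "{0<..<1::real}"
  define D :: "real \<Rightarrow> real \<Rightarrow> real" where "D x t = 1 - x\<^sup>2 * (sin t)\<^sup>2" for x t
  have D_pos: "0 < D x t" if "x \<in> ?U" for x t
    using ell_radicand_pos[of x t] that by (simp add: D_def abs_square_less_1)
  have "((\<lambda>x. integral {0..pi / 2} (\<lambda>t. 1 / sqrt (D x t))) has_real_derivative
      integral {0..pi / 2} (\<lambda>t. (1 / (D q t * sqrt (D q t)) - 1 / sqrt (D q t)) / q)) (at q)"
  proof (rule has_real_derivative_parametric_integral[where U = ?U])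
    show "((\<lambda>x. 1 / sqrt (D x t)) has_real_derivative
        (1 / (D x t * sqrt (D x t)) - 1 / sqrt (D x t)) / x) (at x)" if "x \<in> ?U" for x t
      using D_pos[OF that, of t] that unfolding D_def
      by (intro has_real_derivative_inverse_sqrt_radicand) auto
    show "continuous_on (?U \<times> {0..pi / 2})
        (\<lambda>(x, t). (1 / (D x t * sqrt (D x t)) - 1 / sqrt (D x t)) / x)"
      using D_pos unfolding D_def case_prod_beta by (auto intro!: continuous_intros simp: less_imp_neq)
  qed (use assms D_pos in \<open>auto simp: D_def intro!: continuous_intros simp: less_imp_neq\<close>)
  moreover have "integral {0..pi / 2} (\<lambda>t. (1 / (D q t * sqrt (D q t)) - 1 / sqrt (D q t)) / q)
      = (ellEc q / (1 - q\<^sup>2) - ellKc q) / q"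
  proof -
    have "q\<^sup>2 < 1" using assms by (simp add: abs_square_less_1)
    then have J: "integral {0..pi / 2} (\<lambda>t. 1 / (D q t * sqrt (D q t))) = ellEc q / (1 - q\<^sup>2)"
      using ell_integral_inverse_cube by (simp add: D_def field_simps)
    have cont: "continuous_on {0..pi / 2} (\<lambda>t. 1 / (D q t * sqrt (D q t)))"
      "continuous_on {0..pi / 2} (\<lambda>t. 1 / sqrt (D q t))"
      using D_pos[of q] assms unfolding D_def by (auto intro!: continuous_intros simp: less_imp_neq)
    show ?thesis
      using integral_diff[OF integrable_continuous_interval integrable_continuous_interval, OF cont]
        ellKc_eq_integral[OF \<open>q\<^sup>2 < 1\<close>] unfolding D_def[symmetric] by (simp only: J integral_divide)
  qed
  moreover have "integral {0..pi / 2} (\<lambda>t. 1 / sqrt (D x t)) = ellKc x" if "x \<in> ?U" for x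
    using that ellKc_eq_integral[of x] by (simp add: D_def abs_square_less_1)
  ultimately show ?thesis
    using assms has_field_derivative_transform_within_open[where S = ?U] by simp
qed

lemma ellEc_has_real_derivative:
  assumes "0 < q" "q < 1"
  shows "(ellEc has_real_derivative (ellEc q - ellKc q) / q) (at q)"
proof -
  let ?U = "{0<..<1::real}"
  define D :: "real \<Rightarrow> real \<Rightarrow> real" where "D x t = 1 - x\<^sup>2 * (sin t)\<^sup>2" for x t
  have D_pos: "0 < D x t" if "x \<in> ?U" for x t
    using ell_radicand_pos[of x t] that by (simp add: D_def abs_square_less_1)
  have "((\<lambda>x. integral {0..pi / 2} (\<lambda>t. sqrt (D x t))) has_real_derivative
      integral {0..pi / 2} (\<lambda>t. (sqrt (D q t) - 1 / sqrt (D q t)) / q)) (at q)"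
  proof (rule has_real_derivative_parametric_integral[where U = ?U])
    show "((\<lambda>x. sqrt (D x t)) has_real_derivative (sqrt (D x t) - 1 / sqrt (D x t)) / x) (at x)"
      if "x \<in> ?U" for x t
      using D_pos[OF that, of t] that unfolding D_def
      by (intro has_real_derivative_sqrt_radicand) auto
    show "continuous_on (?U \<times> {0..pi / 2}) (\<lambda>(x, t). (sqrt (D x t) - 1 / sqrt (D x t)) / x)"
      using D_pos unfolding D_def case_prod_beta by (auto intro!: continuous_intros simp: less_imp_neq)
  qed (use assms in \<open>auto simp: D_def intro!: continuous_intros\<close>)
  moreover have "integral {0..pi / 2} (\<lambda>t. (sqrt (D q t) - 1 / sqrt (D q t)) / q)
      = (ellEc q - ellKc q) / q"
  proof -
    have "q\<^sup>2 < 1" using assms by (simp add: abs_square_less_1)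
    have cont: "continuous_on {0..pi / 2} (\<lambda>t. sqrt (D q t))"
      "continuous_on {0..pi / 2} (\<lambda>t. 1 / sqrt (D q t))"
      using D_pos[of q] assms unfolding D_def by (auto intro!: continuous_intros simp: less_imp_neq)
    show ?thesis
      using integral_diff[OF integrable_continuous_interval integrable_continuous_interval, OF cont]
        ellKc_eq_integral[OF \<open>q\<^sup>2 < 1\<close>] ellEc_eq_integral[of q] by (simp add: D_def)
  qed
  moreover have "ellEc = (\<lambda>x. integral {0..pi / 2} (\<lambda>t. sqrt (D x t)))"
    by (simp add: D_def ellEc_eq_integral[abs_def])
  ultimately show ?thesis
    using assms by simp
qed

lemma ellEc_pos:
  assumes "q\<^sup>2 < 1"
  shows "0 < ellEc q"
proof -
  have "ellE 0 q < ellE (pi / 2) q"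
    using DERIV_pos_imp_increasing[of 0 "pi / 2" "\<lambda>x. ellE x q"] ellE_has_real_derivative
      ell_sqrt_radicand_pos[OF assms] by force
  then show ?thesis by (simp add: ellEc_def)
qed

lemma ellEc_le_pi_half: "ellEc q \<le> pi / 2"
proof -
  have "(\<lambda>x. ellE x q - x) (pi / 2) \<le> (\<lambda>x. ellE x q - x) 0"
  proof (rule DERIV_nonpos_imp_nonincreasing[where f = "\<lambda>x. ellE x q - x"])
    fix x :: real
    have "sqrt (1 - q\<^sup>2 * (sin x)\<^sup>2) \<le> 1" by simp
    then show "\<exists>y. ((\<lambda>x. ellE x q - x) has_real_derivative y) (at x) \<and> y \<le> 0"
      using DERIV_diff[OF ellE_has_real_derivative DERIV_ident] by force
  qed simp
  then show ?thesis by (simp add: ellEc_def)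
qed

lemma ellEc_le_ellKc:
  assumes "q\<^sup>2 < 1"
  shows "ellEc q \<le> ellKc q"
proof -
  have "(\<lambda>x. ellF x q - ellE x q) 0 \<le> (\<lambda>x. ellF x q - ellE x q) (pi / 2)"
  proof (rule DERIV_nonneg_imp_nondecreasing[where f = "\<lambda>x. ellF x q - ellE x q"])
    fix x :: real
    have "sqrt (1 - q\<^sup>2 * (sin x)\<^sup>2) \<le> 1 / sqrt (1 - q\<^sup>2 * (sin x)\<^sup>2)"
      using ell_sqrt_radicand_pos[OF assms, of x] by (simp add: field_simps mult_le_one)
    then show "\<exists>y. ((\<lambda>x. ellF x q - ellE x q) has_real_derivative y) (at x) \<and> 0 \<le> y"
      using DERIV_diff[OF ellF_has_real_derivative[OF assms] ellE_has_real_derivative] by force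
  qed simp
  then show ?thesis by (simp add: ellEc_def ellKc_def)
qed

lemma ell_sqrt_radicand_le:
  fixes q d x :: real
  assumes "q\<^sup>2 < 1" "1 - q\<^sup>2 \<le> d\<^sup>2" "0 \<le> d" "0 \<le> x" "x \<le> pi / 2"
  shows "sqrt (1 - q\<^sup>2 * (sin x)\<^sup>2) \<le> pi / 2 - x + d"
proof -
  define u where "u = pi / 2 - x"
  have "0 \<le> u"
    using assms by (simp add: u_def)
  have "cos x \<le> u"
    using sin_x_le_x[OF \<open>0 \<le> u\<close>] by (simp add: u_def sin_cos_eq)
  then have "(cos x)\<^sup>2 \<le> u\<^sup>2"
    using assms by (intro power_mono cos_ge_zero) auto
  moreover have "1 - q\<^sup>2 * (sin x)\<^sup>2 = (cos x)\<^sup>2 + (1 - q\<^sup>2) * (sin x)\<^sup>2"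
    by (simp add: cos_squared_eq algebra_simps)
  moreover have "(1 - q\<^sup>2) * (sin x)\<^sup>2 \<le> d\<^sup>2"
    using assms(1,2) mult_mono[of "1 - q\<^sup>2" "d\<^sup>2" "(sin x)\<^sup>2" 1] by (simp add: abs_square_le_1)
  moreover have "u\<^sup>2 + d\<^sup>2 \<le> (u + d)\<^sup>2"
    using \<open>0 \<le> u\<close> \<open>0 \<le> d\<close> by (simp add: power2_eq_square algebra_simps)
  ultimately show ?thesis
    using \<open>0 \<le> u\<close> \<open>0 \<le> d\<close> by (intro real_le_lsqrt) (auto simp: u_def)
qed

lemma ellKc_ge_ln:
  assumes q: "q\<^sup>2 < 1" "1 - q\<^sup>2 \<le> d\<^sup>2" and "0 < d"
  shows "ln ((pi / 2 + d) / d) \<le> ellKc q"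
proof -
  have "(\<lambda>x. ellF x q + ln (pi / 2 - x + d)) 0 \<le> (\<lambda>x. ellF x q + ln (pi / 2 - x + d)) (pi / 2)"
  proof (rule DERIV_nonneg_imp_nondecreasing[where f = "\<lambda>x. ellF x q + ln (pi / 2 - x + d)"])
    fix x :: real
    assume x: "0 \<le> x" "x \<le> pi / 2"
    then have "0 < pi / 2 - x + d"
      using \<open>0 < d\<close> by simp
    then have "1 / (pi / 2 - x + d) \<le> 1 / sqrt (1 - q\<^sup>2 * (sin x)\<^sup>2)"
      using ell_sqrt_radicand_le[OF q _ x] ell_sqrt_radicand_pos[OF q(1), of x] \<open>0 < d\<close>
      by (simp add: frac_le)
    moreover have "((\<lambda>x. ellF x q + ln (pi / 2 - x + d)) has_real_derivative
        1 / sqrt (1 - q\<^sup>2 * (sin x)\<^sup>2) - 1 / (pi / 2 - x + d)) (at x)"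
      using \<open>0 < pi / 2 - x + d\<close>
      by (auto intro!: derivative_eq_intros ellF_has_real_derivative[OF q(1)] simp: field_simps)
    ultimately show "\<exists>y. ((\<lambda>x. ellF x q + ln (pi / 2 - x + d)) has_real_derivative y) (at x) \<and> 0 \<le> y"
      by force
  qed simp
  then have "ln (pi / 2 + d) - ln d \<le> ellKc q"
    by (simp add: ellKc_def)
  moreover have "ln (pi / 2 + d) - ln d = ln ((pi / 2 + d) / d)"
    using \<open>0 < d\<close> by (intro ln_divide_pos[symmetric]) (simp_all add: add_pos_pos)
  ultimately show ?thesis by simp
qed

lemma ellKc_gt_pi: "pi < ellKc (99999 / 100000)"
proof -
  have "ln ((pi / 2 + 1 / 100) / (1 / 100)) \<le> ellKc (99999 / 100000)"
    by (rule ellKc_ge_ln) (simp_all add: power2_eq_square)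
  moreover have "4 < ln ((pi / 2 + 1 / 100) / (1 / 100))"
  proof -
    have "exp (4 :: real) = exp 1 * exp 1 * exp 1 * exp 1"
      by (simp add: exp_add[symmetric])
    also have "\<dots> \<le> 3 * 3 * 3 * 3"
      using exp_le by (intro mult_mono) auto
    also have "\<dots> < (pi / 2 + 1 / 100) / (1 / 100)"
      using pi_gt3 by simp
    finally have "ln (exp 4) < ln ((pi / 2 + 1 / 100) / (1 / 100))"
      by (intro ln_less_cancel_iff[THEN iffD2]) (simp_all add: add_pos_pos)
    then show ?thesis by simp
  qed
  ultimately show ?thesis
    using pi_less_4 by linarith
qed

section \<open>The parameters \<open>qstar\<close>, \<open>qhat\<close>, \<open>q1\<close> and \<open>q2\<close>\<close>

definition Gpar :: "real \<Rightarrow> real" where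
  "Gpar q = 2 * ellEc q - ellKc q"

lemma Gpar_has_real_derivative:
  assumes "0 < q" "q < 1"
  shows "(Gpar has_real_derivative
           ((1 - 2 * q\<^sup>2) * ellEc q - (1 - q\<^sup>2) * ellKc q) / (q * (1 - q\<^sup>2))) (at q)"
proof -
  have "(Gpar has_real_derivative
      2 * ((ellEc q - ellKc q) / q) - (ellEc q / (1 - q\<^sup>2) - ellKc q) / q) (at q)"
    unfolding Gpar_def[abs_def]
    by (intro DERIV_diff DERIV_cmult ellEc_has_real_derivative ellKc_has_real_derivative assms)
  moreover have "q\<^sup>2 < 1"
    using assms by (simp add: abs_square_less_1)
  then have "2 * ((ellEc q - ellKc q) / q) - (ellEc q / (1 - q\<^sup>2) - ellKc q) / q
      = ((1 - 2 * q\<^sup>2) * ellEc q - (1 - q\<^sup>2) * ellKc q) / (q * (1 - q\<^sup>2))"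
    using assms by (simp add: field_simps)
  ultimately show ?thesis by simp
qed

lemma Gpar_derivative_numerator_neg:
  assumes "0 < q" "q < 1"
  shows "(1 - 2 * q\<^sup>2) * ellEc q - (1 - q\<^sup>2) * ellKc q < 0"
proof -
  have q: "q\<^sup>2 < 1" "0 < q\<^sup>2"
    using assms by (simp_all add: abs_square_less_1)
  have K: "0 < ellKc q"
    using ellKc_ge_pi_half[OF q(1)] pi_gt_zero by linarith
  show ?thesis
  proof (cases "0 \<le> 1 - 2 * q\<^sup>2")
    case True
    then have "(1 - 2 * q\<^sup>2) * ellEc q \<le> (1 - 2 * q\<^sup>2) * ellKc q"
      using ellEc_le_ellKc[OF q(1)] by (simp add: mult_left_mono)
    moreover have "(1 - 2 * q\<^sup>2) * ellKc q < (1 - q\<^sup>2) * ellKc q"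
      using K q by (simp add: mult_strict_right_mono)
    ultimately show ?thesis by linarith
  next
    case False
    then have "(1 - 2 * q\<^sup>2) * ellEc q < 0"
      using ellEc_pos[OF q(1)] by (simp add: mult_neg_pos)
    moreover have "0 < (1 - q\<^sup>2) * ellKc q"
      using K q by simp
    ultimately show ?thesis by linarith
  qed
qed

lemma Gpar_strict_antimono:
  assumes "0 < a" "a < b" "b < 1"
  shows "Gpar b < Gpar a"
proof (rule DERIV_neg_imp_decreasing[OF \<open>a < b\<close>])
  fix x
  assume "a \<le> x" "x \<le> b"
  with assms have x: "0 < x" "x < 1" by auto
  then have "((1 - 2 * x\<^sup>2) * ellEc x - (1 - x\<^sup>2) * ellKc x) / (x * (1 - x\<^sup>2)) < 0"
    using Gpar_derivative_numerator_neg[OF x] by (simp add: divide_neg_pos abs_square_less_1)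
  then show "\<exists>y. (Gpar has_real_derivative y) (at x) \<and> y < 0"
    using Gpar_has_real_derivative[OF x] by blast
qed

lemma fpar_has_real_derivative:
  assumes "0 < q" "q < 1"
  shows "(fpar has_real_derivative
           2 * q * ((10 * q\<^sup>2 - 13 / 2) * ellKc q - 10 * (2 * q\<^sup>2 - 1) * ellEc q)) (at q)"
proof -
  define K E K' E' where "K = ellKc q" and "E = ellEc q"
    and "K' = (ellEc q / (1 - q\<^sup>2) - ellKc q) / q" and "E' = (ellEc q - ellKc q) / q"
  have "q\<^sup>2 < 1"
    using assms by (simp add: abs_square_less_1)
  then have K': "q * (1 - q\<^sup>2) * K' = E - (1 - q\<^sup>2) * K" and E': "q * E' = E - K"
    using assms by (simp_all add: K'_def E'_def K_def E_def field_simps)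
  have "(ellKc has_real_derivative K') (at q within UNIV)" "(ellEc has_real_derivative E') (at q within UNIV)"
    unfolding K'_def E'_def using assms by (simp_all add: ellKc_has_real_derivative ellEc_has_real_derivative)
  then have "(fpar has_real_derivative
      (16 * q ^ 3 - 10 * q) * K + (4 * q ^ 4 - 5 * q\<^sup>2 + 1) * K'
      + (- 32 * q ^ 3 + 16 * q) * E + (- 8 * q ^ 4 + 8 * q\<^sup>2 - 1) * E') (at q)"
    unfolding fpar_def[abs_def] K_def E_def
    by (auto intro!: derivative_eq_intros simp: algebra_simps)
  moreover have "q * (1 - q\<^sup>2) * ((16 * q ^ 3 - 10 * q) * K + (4 * q ^ 4 - 5 * q\<^sup>2 + 1) * K'
      + (- 32 * q ^ 3 + 16 * q) * E + (- 8 * q ^ 4 + 8 * q\<^sup>2 - 1) * E')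
    = q * (1 - q\<^sup>2) * (2 * q * ((10 * q\<^sup>2 - 13 / 2) * K - 10 * (2 * q\<^sup>2 - 1) * E))"
    using K' E' by algebra
  ultimately show ?thesis
    using assms \<open>q\<^sup>2 < 1\<close> by (simp add: K_def E_def)
qed

lemma gpar_has_real_derivative:
  assumes "0 < q" "q < 1"
  shows "(gpar has_real_derivative 16 * Gpar q * fpar q / (q * (1 - q\<^sup>2))) (at q)"
proof -
  define G' where "G' = ((1 - 2 * q\<^sup>2) * ellEc q - (1 - q\<^sup>2) * ellKc q) / (q * (1 - q\<^sup>2))"
  have "q\<^sup>2 < 1"
    using assms by (simp add: abs_square_less_1)
  then have G': "q * (1 - q\<^sup>2) * G' = (1 - 2 * q\<^sup>2) * ellEc q - (1 - q\<^sup>2) * ellKc q"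
    using assms by (simp add: G'_def)
  have "gpar = (\<lambda>q. 8 * (Gpar q)\<^sup>2 * (2 * q\<^sup>2 - 1))"
    by (simp add: gpar_def[abs_def] Gpar_def[abs_def])
  moreover have "((\<lambda>q. 8 * (Gpar q)\<^sup>2 * (2 * q\<^sup>2 - 1)) has_real_derivative
      16 * Gpar q * G' * (2 * q\<^sup>2 - 1) + 32 * q * (Gpar q)\<^sup>2) (at q)"
    using Gpar_has_real_derivative[OF assms, THEN has_field_derivative_at_within]
    unfolding G'_def[symmetric] by (auto intro!: derivative_eq_intros simp: algebra_simps)
  moreover have "(16 * Gpar q * G' * (2 * q\<^sup>2 - 1) + 32 * q * (Gpar q)\<^sup>2) * (q * (1 - q\<^sup>2))
      = 16 * Gpar q * fpar q"
    unfolding fpar_def Gpar_def using G' by algebra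
  then have "16 * Gpar q * G' * (2 * q\<^sup>2 - 1) + 32 * q * (Gpar q)\<^sup>2
      = 16 * Gpar q * fpar q / (q * (1 - q\<^sup>2))"
    using assms \<open>q\<^sup>2 < 1\<close> by (subst nonzero_eq_divide_eq) auto
  ultimately show ?thesis by simp
qed

lemma isCont_Gpar: "0 < q \<Longrightarrow> q < 1 \<Longrightarrow> isCont Gpar q"
  by (rule DERIV_isCont[OF Gpar_has_real_derivative])

lemma isCont_fpar: "0 < q \<Longrightarrow> q < 1 \<Longrightarrow> isCont fpar q"
  by (rule DERIV_isCont[OF fpar_has_real_derivative])

lemma isCont_gpar: "0 < q \<Longrightarrow> q < 1 \<Longrightarrow> isCont gpar q"
  by (rule DERIV_isCont[OF gpar_has_real_derivative])

lemma inv_sqrt2_bounds: "0 < 1 / sqrt 2" "1 / sqrt 2 < (19 / 20 :: real)" "(1 / sqrt 2 :: real)\<^sup>2 = 1 / 2"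
proof -
  show "0 < 1 / sqrt 2" by simp
  show sq: "(1 / sqrt 2 :: real)\<^sup>2 = 1 / 2" by (simp add: power_divide)
  have "(1 / sqrt 2 :: real)\<^sup>2 < (19 / 20)\<^sup>2" using sq by (simp add: power2_eq_square)
  then show "1 / sqrt 2 < (19 / 20 :: real)" by (rule power_less_imp_less_base) simp
qed

lemma Gpar_inv_sqrt2_pos: "0 < Gpar (1 / sqrt 2)"
proof -
  define q :: real where "q = 1 / sqrt 2"
  have "q\<^sup>2 = 1 / 2" unfolding q_def by (rule inv_sqrt2_bounds)
  then have q: "q\<^sup>2 < 1" by simp
  have cos_eq: "1 - 2 * q\<^sup>2 * (sin x)\<^sup>2 = (cos x)\<^sup>2" for x
    using \<open>q\<^sup>2 = 1 / 2\<close> by (simp add: cos_squared_eq)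
  have deriv: "((\<lambda>x. 2 * ellE x q - ellF x q) has_real_derivative
      (cos x)\<^sup>2 / sqrt (1 - q\<^sup>2 * (sin x)\<^sup>2)) (at x)" for x
    using twice_ellE_minus_ellF_has_real_derivative[OF q, of x] unfolding cos_eq .
  have "1 < pi / 2" using pi_gt3 by simp
  have "(\<lambda>x. 2 * ellE x q - ellF x q) 0 < (\<lambda>x. 2 * ellE x q - ellF x q) 1"
  proof (rule DERIV_pos_imp_increasing[where f = "\<lambda>x. 2 * ellE x q - ellF x q"])
    fix x :: real
    assume "0 \<le> x" "x \<le> 1"
    then have "0 < cos x" using \<open>1 < pi / 2\<close> by (intro cos_gt_zero_pi) auto
    then show "\<exists>y. ((\<lambda>x. 2 * ellE x q - ellF x q) has_real_derivative y) (at x) \<and> 0 < y"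
      using deriv ell_sqrt_radicand_pos[OF q, of x] by (blast intro: divide_pos_pos zero_less_power)
  qed simp
  moreover have "(\<lambda>x. 2 * ellE x q - ellF x q) 1 \<le> (\<lambda>x. 2 * ellE x q - ellF x q) (pi / 2)"
  proof (rule DERIV_nonneg_imp_nondecreasing[where f = "\<lambda>x. 2 * ellE x q - ellF x q"])
    fix x :: real
    show "\<exists>y. ((\<lambda>x. 2 * ellE x q - ellF x q) has_real_derivative y) (at x) \<and> 0 \<le> y"
      using deriv ell_sqrt_radicand_pos[OF q, of x] by (blast intro: divide_nonneg_pos zero_le_power2)
  qed (use \<open>1 < pi / 2\<close> in simp)
  ultimately show ?thesis
    by (simp add: Gpar_def ellEc_def ellKc_def q_def)
qed

lemma Gpar_99999_100000_neg: "Gpar (99999 / 100000) < 0"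
  using ellKc_gt_pi ellEc_le_pi_half[of "99999 / 100000"] by (simp add: Gpar_def)

lemma fpar_inv_sqrt2_pos: "0 < fpar (1 / sqrt 2)"
proof -
  have "(1 / sqrt 2 :: real) ^ 4 = ((1 / sqrt 2)\<^sup>2)\<^sup>2" by simp
  then have "fpar (1 / sqrt 2) = Gpar (1 / sqrt 2) / 2"
    by (simp add: fpar_def Gpar_def inv_sqrt2_bounds(3) power2_eq_square algebra_simps)
  then show ?thesis using Gpar_inv_sqrt2_pos by simp
qed

lemma fpar_19_20_neg: "fpar (19 / 20) < 0"
proof -
  have "(19 / 20 :: real)\<^sup>2 < 1" by (simp add: power2_eq_square)
  then have "0 < ellKc (19 / 20)" "0 < ellEc (19 / 20)"
    using ellKc_ge_pi_half ellEc_pos pi_gt_zero by (auto intro: less_le_trans[of 0 "pi / 2"])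
  moreover have "4 * (19 / 20) ^ 4 - 5 * (19 / 20)\<^sup>2 + 1 < (0 :: real)"
    "- 8 * (19 / 20) ^ 4 + 8 * (19 / 20)\<^sup>2 - 1 < (0 :: real)"
    by (simp_all add: eval_nat_numeral)
  ultimately show ?thesis
    unfolding fpar_def by (simp add: add_neg_neg mult_neg_pos)
qed

lemma least_zero_exists:
  fixes f :: "real \<Rightarrow> real"
  assumes "continuous_on {a..b} f" "a \<le> b" "f b = 0"
  shows "\<exists>c \<in> {a..b}. f c = 0 \<and> (\<forall>z \<in> {a..b}. f z = 0 \<longrightarrow> c \<le> z)"
proof -
  define Z where "Z = {x \<in> {a..b}. f x = 0}"
  have "closed Z"
    unfolding Z_def using assms(1) by (intro continuous_closed_preimage_constant) auto
  moreover have "b \<in> Z" "bdd_below Z"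
    using assms unfolding Z_def by (auto intro: bdd_belowI[where m = a])
  ultimately have "Inf Z \<in> Z"
    using closed_contains_Inf by blast
  moreover have "Inf Z \<le> z" if "z \<in> Z" for z
    using that \<open>bdd_below Z\<close> by (rule cInf_lower)
  ultimately show ?thesis
    unfolding Z_def by blast
qed

text \<open>Between two zeros \<open>u < v\<close>, \<open>f\<close> is negative just right of \<open>u\<close>; at the first zero \<open>c\<close>
  after such a point \<open>f\<close> would have to approach \<open>0\<close> from below, contradicting \<open>f'(c) < 0\<close>.\<close>
lemma zero_unique_if_derivative_neg_at_zeros:
  fixes f f' :: "real \<Rightarrow> real"
  assumes deriv: "\<And>x. x \<in> {lo..<hi} \<Longrightarrow> (f has_real_derivative f' x) (at x)"
    and neg: "\<And>x. x \<in> {lo..<hi} \<Longrightarrow> f x = 0 \<Longrightarrow> f' x < 0"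
    and zeros: "a \<in> {lo..<hi}" "b \<in> {lo..<hi}" "f a = 0" "f b = 0"
  shows "a = b"
proof (rule ccontr)
  assume "a \<noteq> b"
  then obtain u v where uv: "u \<in> {lo..<hi}" "v \<in> {lo..<hi}" "u < v" "f u = 0" "f v = 0"
    using zeros by (metis linorder_neqE_linordered_idom)
  then have cont: "continuous_on {u..v} f"
    by (intro continuous_at_imp_continuous_on ballI DERIV_isCont[OF deriv]) auto
  obtain d where "0 < d" and d: "\<And>h. 0 < h \<Longrightarrow> h < d \<Longrightarrow> f (u + h) < 0"
    using DERIV_neg_dec_right[OF deriv[OF uv(1)] neg[OF uv(1,4)]] uv(4) by auto
  obtain \<delta> where "0 < \<delta>" "\<delta> < d" "\<delta> < v - u"
    using field_lbound_gt_zero[OF \<open>0 < d\<close>, of "v - u"] \<open>u < v\<close> by auto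
  define x1 where "x1 = u + \<delta>"
  have x1: "u < x1" "x1 < v" "f x1 < 0"
    using \<open>0 < \<delta>\<close> \<open>\<delta> < v - u\<close> d[OF \<open>0 < \<delta>\<close> \<open>\<delta> < d\<close>] by (simp_all add: x1_def)
  obtain c where c: "c \<in> {x1..v}" "f c = 0" and least: "\<And>z. z \<in> {x1..v} \<Longrightarrow> f z = 0 \<Longrightarrow> c \<le> z"
  proof -
    have "continuous_on {x1..v} f"
      using continuous_on_subset[OF cont] x1 by auto
    from least_zero_exists[OF this _ uv(5)] x1 show ?thesis
      using that by auto
  qed
  have "x1 < c" and c_mem: "c \<in> {lo..<hi}"
    using c x1 uv by (auto simp: le_less)
  obtain d' where "0 < d'" and d': "\<And>h. 0 < h \<Longrightarrow> h < d' \<Longrightarrow> 0 < f (c - h)"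
    using DERIV_neg_dec_left[OF deriv[OF c_mem] neg[OF c_mem c(2)]] c(2) by auto
  obtain \<epsilon> where "0 < \<epsilon>" "\<epsilon> < d'" "\<epsilon> < c - x1"
    using field_lbound_gt_zero[OF \<open>0 < d'\<close>, of "c - x1"] \<open>x1 < c\<close> by auto
  define y where "y = c - \<epsilon>"
  have y: "x1 < y" "y < c" "0 < f y"
    using \<open>0 < \<epsilon>\<close> \<open>\<epsilon> < c - x1\<close> d'[OF \<open>0 < \<epsilon>\<close> \<open>\<epsilon> < d'\<close>] by (simp_all add: y_def)
  obtain z where "z \<in> {x1..y}" "f z = 0"
    using IVT'[of f x1 0 y] x1 y c continuous_on_subset[OF cont, of "{x1..y}"] by auto
  with least[of z] y c show False by simp
qed

lemma qstar_spec: "1 / sqrt 2 < qstar" "qstar < 1" "Gpar qstar = 0"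
proof -
  have "continuous_on {1 / sqrt 2..99999 / 100000} Gpar"
    by (intro continuous_at_imp_continuous_on ballI isCont_Gpar)
      (auto intro: less_le_trans[OF inv_sqrt2_bounds(1)])
  then obtain z where z: "z \<in> {1 / sqrt 2..99999 / 100000}" "Gpar z = 0"
    using IVT2'[of Gpar "99999 / 100000" 0 "1 / sqrt 2"] Gpar_99999_100000_neg Gpar_inv_sqrt2_pos
      inv_sqrt2_bounds by force
  then have "0 < z" "z < 1"
    using less_le_trans[OF inv_sqrt2_bounds(1), of z] by auto
  have "qstar = z"
    unfolding qstar_def
  proof (rule the_equality)
    show "0 < z \<and> z < 1 \<and> 2 * ellEc z - ellKc z = 0"
      using \<open>0 < z\<close> \<open>z < 1\<close> z by (simp add: Gpar_def)
    show "w = z" if "0 < w \<and> w < 1 \<and> 2 * ellEc w - ellKc w = 0" for w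
      using that Gpar_strict_antimono[of w z] Gpar_strict_antimono[of z w] \<open>0 < z\<close> \<open>z < 1\<close> z
      by (cases w z rule: linorder_cases) (auto simp: Gpar_def)
  qed
  moreover have "z \<noteq> 1 / sqrt 2"
    using z Gpar_inv_sqrt2_pos by auto
  ultimately show "1 / sqrt 2 < qstar" "qstar < 1" "Gpar qstar = 0"
    using z \<open>z < 1\<close> by auto
qed

lemma Gpar_pos:
  assumes "0 < q" "q < qstar"
  shows "0 < Gpar q"
  using Gpar_strict_antimono[OF assms] qstar_spec by simp

text \<open>Use \<open>f(q) = 0\<close> to eliminate \<open>E\<close>; the sign then comes from \<open>8p\<^sup>2 - 8p + 1 < 0\<close>, \<open>p = q\<^sup>2\<close>.\<close>
lemma fpar_derivative_neg_at_zero: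
  assumes q: "1 / sqrt 2 \<le> q" "q < 1" and "fpar q = 0"
  shows "2 * q * ((10 * q\<^sup>2 - 13 / 2) * ellKc q - 10 * (2 * q\<^sup>2 - 1) * ellEc q) < 0"
proof -
  define p K E where "p = q\<^sup>2" and "K = ellKc q" and "E = ellEc q"
  have "0 < q" using q inv_sqrt2_bounds(1) by linarith
  have p: "1 / 2 \<le> p" "p < 1"
    using power_mono[OF q(1), of 2] inv_sqrt2_bounds(1,3) q \<open>0 < q\<close>
    by (simp_all add: p_def abs_square_less_1)
  have "0 < K" "0 < E"
    using ellKc_ge_pi_half[of q] ellEc_pos[of q] pi_gt_zero \<open>p < 1\<close> unfolding K_def E_def p_def
    by linarith+
  have zero: "(8 * p\<^sup>2 - 8 * p + 1) * E = (4 * p\<^sup>2 - 5 * p + 1) * K"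
    using \<open>fpar q = 0\<close> by (simp add: fpar_def p_def K_def E_def power_mult[symmetric] algebra_simps)
  have "4 * p\<^sup>2 - 5 * p + 1 = (4 * p - 1) * (p - 1)"
    by algebra
  then have "4 * p\<^sup>2 - 5 * p + 1 < 0"
    using p by (simp add: mult_pos_neg)
  then have "(8 * p\<^sup>2 - 8 * p + 1) * E < 0"
    using zero \<open>0 < K\<close> by (simp add: mult_neg_pos)
  then have D: "8 * p\<^sup>2 - 8 * p + 1 < 0"
    using \<open>0 < E\<close> by (simp add: mult_less_0_iff)
  have "(8 * p\<^sup>2 - 8 * p + 1) * ((10 * p - 13 / 2) * K - 10 * (2 * p - 1) * E)
      = (8 * (p - 1 / 2)\<^sup>2 + 3 / 2) * K"
    using zero by algebra
  moreover have "0 < (8 * (p - 1 / 2)\<^sup>2 + 3 / 2) * K"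
    using \<open>0 < K\<close> by (simp add: add_nonneg_pos)
  ultimately have "0 < (8 * p\<^sup>2 - 8 * p + 1) * ((10 * p - 13 / 2) * K - 10 * (2 * p - 1) * E)"
    by simp
  then have "(10 * p - 13 / 2) * K - 10 * (2 * p - 1) * E < 0"
    using D by (simp add: zero_less_mult_iff)
  then show ?thesis
    using \<open>0 < q\<close> by (simp add: p_def K_def E_def mult_pos_neg)
qed

lemma qhat_spec: "1 / sqrt 2 < qhat" "qhat < 19 / 20" "fpar qhat = 0"
  and fpar_zero_unique: "1 / sqrt 2 \<le> q \<Longrightarrow> q < 1 \<Longrightarrow> fpar q = 0 \<Longrightarrow> q = qhat"
proof -
  have uniq: "v = w" if "v \<in> {1 / sqrt 2..<1}" "w \<in> {1 / sqrt 2..<1}" "fpar v = 0" "fpar w = 0" for v w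
  proof (rule zero_unique_if_derivative_neg_at_zeros[OF _ _ that])
    fix x :: real
    assume x: "x \<in> {1 / sqrt 2..<1}"
    then have "0 < x" "x < 1"
      using less_le_trans[OF inv_sqrt2_bounds(1)] by auto
    then show "(fpar has_real_derivative
        2 * x * ((10 * x\<^sup>2 - 13 / 2) * ellKc x - 10 * (2 * x\<^sup>2 - 1) * ellEc x)) (at x)"
      by (rule fpar_has_real_derivative)
    show "2 * x * ((10 * x\<^sup>2 - 13 / 2) * ellKc x - 10 * (2 * x\<^sup>2 - 1) * ellEc x) < 0"
      if "fpar x = 0"
      using x that by (intro fpar_derivative_neg_at_zero) auto
  qed
  have "continuous_on {1 / sqrt 2..19 / 20} fpar"
    by (intro continuous_at_imp_continuous_on ballI isCont_fpar)
      (auto intro: less_le_trans[OF inv_sqrt2_bounds(1)])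
  then obtain z where z: "z \<in> {1 / sqrt 2..19 / 20}" "fpar z = 0"
    using IVT2'[of fpar "19 / 20" 0 "1 / sqrt 2"] fpar_19_20_neg fpar_inv_sqrt2_pos
      inv_sqrt2_bounds by force
  have "qhat = z"
    unfolding qhat_def
  proof (rule the_equality)
    show "1 / sqrt 2 \<le> z \<and> z < 1 \<and> fpar z = 0"
      using z by auto
    show "w = z" if "1 / sqrt 2 \<le> w \<and> w < 1 \<and> fpar w = 0" for w
      using that z uniq[of w z] by auto
  qed
  moreover have "z \<noteq> 1 / sqrt 2" "z \<noteq> 19 / 20"
    using z(2) fpar_inv_sqrt2_pos fpar_19_20_neg by (metis less_irrefl)+
  ultimately show "1 / sqrt 2 < qhat" "qhat < 19 / 20" "fpar qhat = 0"
    using z by auto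
  show "q = qhat" if "1 / sqrt 2 \<le> q" "q < 1" "fpar q = 0"
    using that z \<open>qhat = z\<close> uniq[of q z] by auto
qed

lemma fpar_pos:
  assumes "1 / sqrt 2 \<le> q" "q < qhat"
  shows "0 < fpar q"
proof (rule ccontr)
  assume "\<not> 0 < fpar q"
  moreover have "continuous_on {1 / sqrt 2..q} fpar"
    using assms qhat_spec by (intro continuous_at_imp_continuous_on ballI isCont_fpar)
      (auto intro: less_le_trans[OF inv_sqrt2_bounds(1)])
  ultimately obtain w where "w \<in> {1 / sqrt 2..q}" "fpar w = 0"
    using IVT2'[of fpar q 0 "1 / sqrt 2"] fpar_inv_sqrt2_pos assms by force
  then have "w = qhat"
    using assms qhat_spec by (intro fpar_zero_unique) auto
  with \<open>w \<in> {1 / sqrt 2..q}\<close> assms show False by simp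
qed

lemma fpar_neg:
  assumes "qhat < q" "q < 1"
  shows "fpar q < 0"
proof (rule ccontr)
  assume "\<not> fpar q < 0"
  have cont: "continuous_on {a..b} fpar" if "1 / sqrt 2 \<le> a" "b < 1" for a b
    using that by (intro continuous_at_imp_continuous_on ballI isCont_fpar)
      (auto intro: less_le_trans[OF inv_sqrt2_bounds(1)])
  obtain w where "w \<in> {min q (19 / 20)..max q (19 / 20)}" "fpar w = 0"
  proof (cases "q \<le> 19 / 20")
    case True
    then show ?thesis
      using that IVT2'[of fpar "19 / 20" 0 q] fpar_19_20_neg \<open>\<not> fpar q < 0\<close> cont[of q "19 / 20"]
        assms qhat_spec by force
  next
    case False
    then show ?thesis
      using that IVT'[of fpar "19 / 20" 0 q] fpar_19_20_neg \<open>\<not> fpar q < 0\<close> cont[of "19 / 20" q]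
        assms inv_sqrt2_bounds(2) by force
  qed
  moreover from this have "w = qhat"
    using assms qhat_spec by (intro fpar_zero_unique) (auto simp: min_def max_def split: if_splits)
  ultimately show False
    using assms qhat_spec by (auto simp: min_def split: if_splits)
qed

lemma gpar_inv_sqrt2: "gpar (1 / sqrt 2) = 0"
  by (simp add: gpar_def inv_sqrt2_bounds(3))

lemma gpar_qstar: "gpar qstar = 0"
  using qstar_spec(3) by (simp add: gpar_def Gpar_def)

lemma gpar_strict_mono:
  assumes "1 / sqrt 2 \<le> a" "a < b" "b \<le> qhat" "b \<le> qstar"
  shows "gpar a < gpar b"
proof (rule DERIV_pos_imp_increasing_open[OF \<open>a < b\<close>])
  fix x
  assume "a < x" "x < b"
  with assms qstar_spec have x: "0 < x" "x < 1" "x < qhat" "x < qstar" "1 / sqrt 2 \<le> x"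
    using less_le_trans[OF inv_sqrt2_bounds(1)] by auto
  then have "0 < 16 * Gpar x * fpar x / (x * (1 - x\<^sup>2))"
    using Gpar_pos fpar_pos by (simp add: abs_square_less_1)
  then show "\<exists>y. (gpar has_real_derivative y) (at x) \<and> 0 < y"
    using gpar_has_real_derivative[OF x(1,2)] by blast
next
  show "continuous_on {a..b} gpar"
    using assms qstar_spec by (intro continuous_at_imp_continuous_on ballI isCont_gpar)
      (auto intro: less_le_trans[OF inv_sqrt2_bounds(1)])
qed

lemma qhat_less_qstar: "qhat < qstar"
proof (rule ccontr)
  assume "\<not> qhat < qstar"
  then have "gpar (1 / sqrt 2) < gpar qstar"
    using qstar_spec by (intro gpar_strict_mono) auto
  then show False
    using gpar_inv_sqrt2 gpar_qstar by simp
qed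

lemma gpar_strict_antimono:
  assumes "qhat \<le> a" "a < b" "b \<le> qstar"
  shows "gpar b < gpar a"
proof (rule DERIV_neg_imp_decreasing_open[OF \<open>a < b\<close>])
  fix x
  assume "a < x" "x < b"
  with assms qstar_spec qhat_spec have x: "0 < x" "x < 1" "qhat < x" "x < qstar"
    using less_trans[OF inv_sqrt2_bounds(1)] by auto
  then have "16 * Gpar x * fpar x / (x * (1 - x\<^sup>2)) < 0"
    using Gpar_pos[of x] fpar_neg[of x]
    by (simp add: abs_square_less_1 mult_pos_neg divide_neg_pos)
  then show "\<exists>y. (gpar has_real_derivative y) (at x) \<and> y < 0"
    using gpar_has_real_derivative[OF x(1,2)] by blast
next
  show "continuous_on {a..b} gpar"
    using assms qstar_spec qhat_spec by (intro continuous_at_imp_continuous_on ballI isCont_gpar)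
      (auto intro: less_trans[OF inv_sqrt2_bounds(1)] less_le_trans)
qed

lemma q1_bounds:
  assumes "0 < c" "c \<le> lamhat"
  shows "1 / sqrt 2 < q1 c" "q1 c \<le> qhat"
proof -
  have "continuous_on {1 / sqrt 2..qhat} gpar"
    using qhat_spec qhat_less_qstar qstar_spec by (intro continuous_at_imp_continuous_on ballI isCont_gpar)
      (auto intro: less_le_trans[OF inv_sqrt2_bounds(1)])
  then obtain z where z: "z \<in> {1 / sqrt 2..qhat}" "gpar z = c"
    using IVT'[of gpar "1 / sqrt 2" c qhat] gpar_inv_sqrt2 assms qhat_spec by (force simp: lamhat_def)
  then have "z \<noteq> 1 / sqrt 2"
    using gpar_inv_sqrt2 assms by auto
  have "q1 c = z"
    unfolding q1_def
  proof (rule the_equality)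
    show "1 / sqrt 2 < z \<and> z \<le> qhat \<and> gpar z = c"
      using z \<open>z \<noteq> 1 / sqrt 2\<close> by auto
    show "w = z" if "1 / sqrt 2 < w \<and> w \<le> qhat \<and> gpar w = c" for w
      using that z gpar_strict_mono[of w z] gpar_strict_mono[of z w] qhat_less_qstar
      by (cases w z rule: linorder_cases) auto
  qed
  with z \<open>z \<noteq> 1 / sqrt 2\<close> show "1 / sqrt 2 < q1 c" "q1 c \<le> qhat"
    by auto
qed

lemma q2_bounds:
  assumes "0 < c" "c \<le> lamhat"
  shows "qhat \<le> q2 c" "q2 c < qstar"
proof -
  have "continuous_on {qhat..qstar} gpar"
    using qhat_spec qstar_spec by (intro continuous_at_imp_continuous_on ballI isCont_gpar)
      (auto intro: less_trans[OF inv_sqrt2_bounds(1)] less_le_trans)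
  then obtain z where z: "z \<in> {qhat..qstar}" "gpar z = c"
    using IVT2'[of gpar qstar c qhat] gpar_qstar assms qhat_less_qstar by (force simp: lamhat_def)
  then have "z \<noteq> qstar"
    using gpar_qstar assms by auto
  have "q2 c = z"
    unfolding q2_def
  proof (rule the_equality)
    show "qhat \<le> z \<and> z < qstar \<and> gpar z = c"
      using z \<open>z \<noteq> qstar\<close> by auto
    show "w = z" if "qhat \<le> w \<and> w < qstar \<and> gpar w = c" for w
      using that z gpar_strict_antimono[of w z] gpar_strict_antimono[of z w]
      by (cases w z rule: linorder_cases) auto
  qed
  with z \<open>z \<noteq> qstar\<close> show "qhat \<le> q2 c" "q2 c < qstar"
    by auto
qed

lemma inj_on_const_speed_arc_below_qstar:
  assumes "0 < q" "q < qstar" "0 < l"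
  shows "inj_on (const_speed_reparam (arc_curve l q) 0 (arc_len l q)) {0..1}"
proof (rule inj_on_const_speed_arc)
  show "q\<^sup>2 < 1"
    using assms qstar_spec(2) by (simp add: abs_square_less_1)
  show "0 < 2 * ellEc q - ellKc q"
    using Gpar_pos[OF assms(1,2)] by (simp add: Gpar_def)
qed (use assms in auto)

theorem lemma5p2:
  fixes lam l :: real
  assumes "lam > 0" and "l > 0"
  shows "\<forall>\<gamma> \<in> omega lam l. inj_on \<gamma> {0..1}"
proof -
  define c where "c = lam * l\<^sup>2"
  have "0 < c" using assms by (simp add: c_def)
  have "inj_on (gamma_seg l) {0..1}"
    using \<open>l > 0\<close> by (auto simp: inj_on_def gamma_seg_def)
  moreover have "inj_on (gamma_sarc_bar lam l) {0..1}" "inj_on (gamma_larc_bar lam l) {0..1}"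
    if "c \<le> lamhat"
  proof -
    have "0 < q1 c" "q1 c < qstar" "0 < q2 c" "q2 c < qstar"
      using q1_bounds[OF \<open>0 < c\<close> that] q2_bounds[OF \<open>0 < c\<close> that] qhat_less_qstar qhat_spec(1)
        less_trans[OF inv_sqrt2_bounds(1)] by auto
    then show "inj_on (gamma_sarc_bar lam l) {0..1}" "inj_on (gamma_larc_bar lam l) {0..1}"
      unfolding gamma_sarc_bar_def gamma_larc_bar_def Let_def c_def[symmetric]
      using \<open>l > 0\<close> by (simp_all add: inj_on_const_speed_arc_below_qstar)
  qed
  ultimately show ?thesis
    by (simp add: omega_def c_def[symmetric])
qed

end
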